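(* Let $\overline{D}$ and $\overline{A}$ be toric metrized divisors on $X$ with $A$ effective. Then \[ \lim_{l\in\mathbb{N},\,l\to\infty}\frac{1}{l^{n+1}}\int_{l\Delta_D+\Delta_A}\check g_{l\overline{D}+\overline{A}}(x)\,dx=\int_{\Delta_D}\check g_{\overline{D}}(x)\,dx, \] where $g_{l\overline{D}+\overline{A}}=l\,g_{\overline{D}}+g_{\overline{A}}$ and $\check{}$ denotes the Legendre–Fenchel transform below.
   Context: Toric setup: $Q$ free $\mathbb{Z}$-module of rank $n$, $P$ its dual, $Q_\mathbb{R},P_\mathbb{R}$ with pairing $\langle\cdot,\cdot\rangle$; $X$ nonsingular projective complex toric variety with compact torus $\mathbb{S}_Q$ and map $u\mapsto\exp(-u)$, $Q_\mathbb{R}\to\mathbb{T}_Q$, $\chi^m(\exp(-u))=e^{-\langle m,u\rangle}$. For a toric divisor $D$ with canonical rational section $s_D$ and support function $\Psi_D$, $\Delta_D=\{x:\langle x,u\rangle\ge\Psi_D(u)\ \forall u\}$; $l\Delta_D+\Delta_A$ is a Minkowski sum; $dx$ is Lebesgue measure on $P_\mathbb{R}$. The canonical metric $\|\cdot\|_{\infty,D}$ is the $\mathbb{S}_Q$-invariant metric with $\log\|s_D(\exp(-u))\|_{\infty,D}=\inf_{v\in\Delta_D}\langle v,u\rangle$. A toric metrized divisor is $D$ with an $\mathbb{S}_Q$-invariant hermitian metric with ratio to $\|\cdot\|_{\infty,D}$ bounded on $X$. $g_{\overline{D}}(u)=\log\|s_D(\exp(-u))\|_{\overline{D}}$; for a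 function $g$ on $Q_\mathbb{R}$, $\check g(x)=\inf_{u\in Q_\mathbb{R}}(\langle x,u\rangle-g(u))$. *)

theory Defs
  imports "HOL-Analysis.Analysis"
begin

text \<open>Q_R = P_R = real^'n (n = CARD('n)), lattice Q = integer
vectors, pairing = inner product.  A fan is given by a finite set V of ray
generators and a set Sigma of cones, each cone given by its finite set of
ray generators.\<close>

definition int_vec :: "real^'n \<Rightarrow> bool" where
  "int_vec x \<longleftrightarrow> (\<forall>i. x $ i \<in> \<int>)"

definition zbasis :: "(real^'n) set \<Rightarrow> bool" where
  "zbasis B \<longleftrightarrow> finite B \<and> card B = CARD('n) \<and> (\<forall>b\<in>B. int_vec b) \<and>
     (\<forall>x. int_vec x \<longrightarrow> (\<exists>c. (\<forall>b\<in>B. c b \<in> \<int>) \<and> x = (\<Sum>b\<in>B. c b *\<^sub>R b)))"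

definition pos_cone :: "(real^'n) set \<Rightarrow> (real^'n) set" where
  "pos_cone S = {(\<Sum>v\<in>S. l v *\<^sub>R v) | l. \<forall>v\<in>S. l v \<ge> 0}"

text \<open>Fan of a nonsingular projective toric variety: smooth cones, closed under
faces, meeting along faces, complete, and admitting a strictly convex
(ample) support function.\<close>
definition smooth_projective_fan :: "(real^'n) set \<Rightarrow> (real^'n) set set \<Rightarrow> bool" where
  "smooth_projective_fan V \<Sigma> \<longleftrightarrow>
     finite V \<and> finite \<Sigma> \<and>
     (\<forall>S\<in>\<Sigma>. S \<subseteq> V \<and> (\<exists>B. zbasis B \<and> S \<subseteq> B)) \<and>
     (\<forall>S\<in>\<Sigma>. \<forall>T. T \<subseteq> S \<longrightarrow> T \<in> \<Sigma>) \<and>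
     (\<forall>v\<in>V. {v} \<in> \<Sigma>) \<and>
     (\<forall>S\<in>\<Sigma>. \<forall>T\<in>\<Sigma>. pos_cone S \<inter> pos_cone T = pos_cone (S \<inter> T)) \<and>
     (\<Union>S\<in>\<Sigma>. pos_cone S) = UNIV \<and>
     (\<exists>a::real^'n \<Rightarrow> int. \<forall>S\<in>\<Sigma>. card S = CARD('n) \<longrightarrow>
        (\<exists>m. (\<forall>v\<in>S. m \<bullet> v = - of_int (a v)) \<and> (\<forall>v\<in>V - S. m \<bullet> v > - of_int (a v))))"

text \<open>A toric divisor D = sum of a(v) D_v; its support function Psi_D is linear on
each cone with Psi_D(v) = - a(v) on ray generators.\<close>
definition supp_fun :: "(real^'n) set set \<Rightarrow> (real^'n \<Rightarrow> int) \<Rightarrow> real^'n \<Rightarrow> real" where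
  "supp_fun \<Sigma> a u = (THE t. \<exists>S\<in>\<Sigma>. \<exists>l. (\<forall>v\<in>S. l v \<ge> 0) \<and>
      u = (\<Sum>v\<in>S. l v *\<^sub>R v) \<and> t = - (\<Sum>v\<in>S. l v * of_int (a v)))"

definition polytope :: "(real^'n) set set \<Rightarrow> (real^'n \<Rightarrow> int) \<Rightarrow> (real^'n) set" where
  "polytope \<Sigma> a = {x. \<forall>u. x \<bullet> u \<ge> supp_fun \<Sigma> a u}"

definition effective :: "(real^'n) set \<Rightarrow> (real^'n \<Rightarrow> int) \<Rightarrow> bool" where
  "effective V a \<longleftrightarrow> (\<forall>v\<in>V. a v \<ge> 0)"

text \<open>log ||s_D(exp(-u))||_{infinity,D} = inf over Delta_D of <v,u>.\<close>
definition canon_log :: "(real^'n) set \<Rightarrow> real^'n \<Rightarrow> real" where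
  "canon_log \<Delta> u = (INF v\<in>\<Delta>. v \<bullet> u)"

text \<open>g = g_{D-bar} of a toric metrized divisor (continuous S_Q-invariant metric
whose ratio to the canonical metric is bounded).\<close>
definition toric_metrized :: "(real^'n) set set \<Rightarrow> (real^'n \<Rightarrow> int) \<Rightarrow> (real^'n \<Rightarrow> real) \<Rightarrow> bool" where
  "toric_metrized \<Sigma> a g \<longleftrightarrow> continuous_on UNIV g \<and>
     (\<exists>C. \<forall>u. \<bar>g u - canon_log (polytope \<Sigma> a) u\<bar> \<le> C)"

definition legendre :: "(real^'n \<Rightarrow> real) \<Rightarrow> real^'n \<Rightarrow> real" where
  "legendre g x = (INF u. x \<bullet> u - g u)"

end

theory Submission
  imports Defs
begin

text \<open>Substituting x = l y, the l-th integral divided by l^(n+1) becomes the integral over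
  \<Delta>_D + (1/l) \<Delta>_A of the Legendre transform of g_D + g_A / l.  Both metrics differ from the
  canonical ones by a bounded amount and g_A is bounded above (0 \<in> \<Delta>_A as A is effective), so
  these integrands are uniformly bounded on a fixed ball, converge to the Legendre transform of
  g_D on \<Delta>_D, and vanish eventually off the closed set \<Delta>_D.  Dominated convergence concludes.\<close>

lemma zbasis_independent:
  fixes B :: "(real^'n) set"
  assumes "zbasis B"
  shows "independent B"
proof -
  have fin: "finite B" and card: "card B = CARD('n)"
    and spans: "\<And>x. int_vec x \<Longrightarrow> \<exists>c. x = (\<Sum>b\<in>B. c b *\<^sub>R b)"
    using assms unfolding zbasis_def by blast+
  have "Basis \<subseteq> span B"
  proof
    fix x :: "real^'n"
    assume "x \<in> Basis"
    then have "int_vec x" by (auto simp: Basis_vec_def int_vec_def axis_def)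
    then obtain c where "x = (\<Sum>b\<in>B. c b *\<^sub>R b)" using spans by blast
    then show "x \<in> span B" by (simp add: span_sum span_scale span_base)
  qed
  then have "UNIV \<subseteq> span B"
    by (metis span_Basis span_mono span_span)
  then show ?thesis
    by (intro card_le_dim_spanning[of B UNIV]) (use fin card in auto)
qed

lemma independent_sum_coeffs_eq:
  fixes S :: "'a::real_vector set" and f :: "'a \<Rightarrow> real"
  assumes indep: "independent S" and fin: "finite S" and "R \<subseteq> S"
    and eq: "(\<Sum>v\<in>S. l v *\<^sub>R v) = (\<Sum>v\<in>R. m v *\<^sub>R v)"
  shows "(\<Sum>v\<in>S. l v * f v) = (\<Sum>v\<in>R. m v * f v)"
proof -
  define m' where "m' v = (if v \<in> R then m v else 0)" for v
  have "(\<Sum>v\<in>S. m' v *\<^sub>R v) = (\<Sum>v\<in>R. m v *\<^sub>R v)"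
    by (rule sum.mono_neutral_cong_right) (use fin \<open>R \<subseteq> S\<close> in \<open>auto simp: m'_def\<close>)
  with eq have "(\<Sum>v\<in>S. (l v - m' v) *\<^sub>R v) = 0"
    by (simp add: scaleR_left_diff_distrib sum_subtractf)
  then have "\<forall>v\<in>S. l v - m' v = 0"
    using indep dependent_finite[OF fin] by meson
  then have "(\<Sum>v\<in>S. l v * f v) = (\<Sum>v\<in>S. m' v * f v)" by simp
  also have "\<dots> = (\<Sum>v\<in>R. m v * f v)"
    by (rule sum.mono_neutral_cong_right) (use fin \<open>R \<subseteq> S\<close> in \<open>auto simp: m'_def\<close>)
  finally show ?thesis .
qed

lemma smooth_projective_fanD:
  assumes "smooth_projective_fan V \<Sigma>"
  shows fan_cone_subset: "S \<in> \<Sigma> \<Longrightarrow> S \<subseteq> V"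
    and fan_cone_zbasis: "S \<in> \<Sigma> \<Longrightarrow> \<exists>B. zbasis B \<and> S \<subseteq> B"
    and fan_cone_inter: "S \<in> \<Sigma> \<Longrightarrow> T \<in> \<Sigma> \<Longrightarrow> pos_cone S \<inter> pos_cone T = pos_cone (S \<inter> T)"
    and fan_complete: "(\<Union>S\<in>\<Sigma>. pos_cone S) = UNIV"
  using assms unfolding smooth_projective_fan_def by simp_all

text \<open>Two cones meet in a common face, and the generators of a cone are independent, so
  any two nonnegative representations of a vector give the same value of a linear function.\<close>
lemma cone_sum_coeffs_unique:
  assumes fan: "smooth_projective_fan V \<Sigma>" and S: "S \<in> \<Sigma>" and T: "T \<in> \<Sigma>"
    and "\<forall>v\<in>S. l v \<ge> 0" "\<forall>v\<in>T. l' v \<ge> 0"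
    and eq: "(\<Sum>v\<in>S. l v *\<^sub>R v) = (\<Sum>v\<in>T. l' v *\<^sub>R v)"
  shows "(\<Sum>v\<in>S. l v * f v) = (\<Sum>v\<in>T. l' v * f v)"
proof -
  have indep: "independent C \<and> finite C" if C: "C \<in> \<Sigma>" for C
  proof -
    obtain B where B: "zbasis B" "C \<subseteq> B" using fan_cone_zbasis[OF fan C] by blast
    have "finite B" using B(1) unfolding zbasis_def by simp
    then show ?thesis
      using independent_mono[OF zbasis_independent[OF B(1)] B(2)] B(2) finite_subset by blast
  qed
  have "(\<Sum>v\<in>S. l v *\<^sub>R v) \<in> pos_cone S \<inter> pos_cone T"
    unfolding pos_cone_def using assms(4-6) by blast
  also have "\<dots> = pos_cone (S \<inter> T)" by (rule fan_cone_inter[OF fan S T])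
  finally obtain m where m: "(\<Sum>v\<in>S. l v *\<^sub>R v) = (\<Sum>v\<in>S \<inter> T. m v *\<^sub>R v)"
    unfolding pos_cone_def by auto
  have "(\<Sum>v\<in>S. l v * f v) = (\<Sum>v\<in>S \<inter> T. m v * f v)"
    using indep[OF S] by (intro independent_sum_coeffs_eq[OF _ _ _ m]) auto
  also have "\<dots> = (\<Sum>v\<in>T. l' v * f v)"
    using indep[OF T] by (intro independent_sum_coeffs_eq[OF _ _ _ m[unfolded eq], symmetric]) auto
  finally show ?thesis .
qed

lemma supp_fun_cone:
  assumes fan: "smooth_projective_fan V \<Sigma>" and S: "S \<in> \<Sigma>" and l: "\<forall>v\<in>S. l v \<ge> 0"
  shows "supp_fun \<Sigma> a (\<Sum>v\<in>S. l v *\<^sub>R v) = - (\<Sum>v\<in>S. l v * of_int (a v))"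
  unfolding supp_fun_def
proof (rule the_equality)
  fix t
  assume "\<exists>T\<in>\<Sigma>. \<exists>l'. (\<forall>v\<in>T. l' v \<ge> 0) \<and> (\<Sum>v\<in>S. l v *\<^sub>R v) = (\<Sum>v\<in>T. l' v *\<^sub>R v)
            \<and> t = - (\<Sum>v\<in>T. l' v * of_int (a v))"
  then obtain T l' where "T \<in> \<Sigma>" "\<forall>v\<in>T. l' v \<ge> 0"
    "(\<Sum>v\<in>S. l v *\<^sub>R v) = (\<Sum>v\<in>T. l' v *\<^sub>R v)" and t: "t = - (\<Sum>v\<in>T. l' v * of_int (a v))"
    by blast
  then show "t = - (\<Sum>v\<in>S. l v * of_int (a v))"
    using cone_sum_coeffs_unique[OF fan S _ l] by simp
qed (use S l in blast)

lemma supp_fun_nonpos: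
  assumes fan: "smooth_projective_fan V \<Sigma>" and "effective V a"
  shows "supp_fun \<Sigma> a u \<le> 0"
proof -
  have "u \<in> (\<Union>S\<in>\<Sigma>. pos_cone S)" using fan_complete[OF fan] by simp
  then obtain S l where S: "S \<in> \<Sigma>" and l: "\<forall>v\<in>S. l v \<ge> 0" and u: "u = (\<Sum>v\<in>S. l v *\<^sub>R v)"
    unfolding pos_cone_def by blast
  have "0 \<le> (\<Sum>v\<in>S. l v * of_int (a v))"
    using l assms(2) fan_cone_subset[OF fan S] unfolding effective_def by (intro sum_nonneg) auto
  then show ?thesis unfolding u supp_fun_cone[OF fan S l] by simp
qed

lemma zero_mem_polytope:
  "smooth_projective_fan V \<Sigma> \<Longrightarrow> effective V a \<Longrightarrow> 0 \<in> polytope \<Sigma> a"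
  unfolding polytope_def by (simp add: supp_fun_nonpos)

lemma compact_polytope:
  fixes \<Sigma> :: "(real^'n) set set"
  shows "compact (polytope \<Sigma> a)"
proof -
  have "closed {x::real^'n. supp_fun \<Sigma> a u \<le> x \<bullet> u}" for u
    using closed_halfspace_ge[of "supp_fun \<Sigma> a u" u] by (simp add: inner_commute)
  moreover have "polytope \<Sigma> a = (\<Inter>u. {x. supp_fun \<Sigma> a u \<le> x \<bullet> u})"
    unfolding polytope_def by blast
  ultimately have "closed (polytope \<Sigma> a)" by auto
  moreover
  let ?M = "\<Sum>i\<in>UNIV. \<bar>supp_fun \<Sigma> a (axis i 1)\<bar> + \<bar>supp_fun \<Sigma> a (- axis i 1)\<bar>"
  have "norm x \<le> ?M" if "x \<in> polytope \<Sigma> a" for x :: "real^'n"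
  proof -
    have "\<bar>x $ i\<bar> \<le> \<bar>supp_fun \<Sigma> a (axis i 1)\<bar> + \<bar>supp_fun \<Sigma> a (- axis i 1)\<bar>" for i
      using that[unfolded polytope_def, simplified, rule_format, of "axis i 1"]
        that[unfolded polytope_def, simplified, rule_format, of "- axis i 1"]
      by (simp add: inner_axis)
    then have "(\<Sum>i\<in>UNIV. \<bar>x $ i\<bar>) \<le> ?M" by (intro sum_mono)
    then show ?thesis using norm_le_l1_cart[of x] by linarith
  qed
  then have "bounded (polytope \<Sigma> a)" unfolding bounded_iff by blast
  ultimately show ?thesis by (simp add: compact_eq_bounded_closed)
qed

lemma canon_log_le:
  fixes P :: "(real^'n) set"
  assumes "bounded P" "y \<in> P"
  shows "canon_log P u \<le> y \<bullet> u"
proof -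
  have "bounded ((\<lambda>v. v \<bullet> u) ` P)"
    using assms(1) bounded_linear_image bounded_linear_inner_left by blast
  then show ?thesis
    unfolding canon_log_def by (intro cINF_lower bounded_imp_bdd_below assms(2))
qed

lemma toric_metrized_lower_bound:
  fixes \<Sigma> :: "(real^'n) set set"
  assumes "toric_metrized \<Sigma> a g"
  obtains C where "0 \<le> C" "\<And>y u. y \<in> polytope \<Sigma> a \<Longrightarrow> - C \<le> y \<bullet> u - g u"
proof -
  obtain C where C: "\<And>u. \<bar>g u - canon_log (polytope \<Sigma> a) u\<bar> \<le> C"
    using assms unfolding toric_metrized_def by blast
  have "- C \<le> y \<bullet> u - g u" if "y \<in> polytope \<Sigma> a" for y u
    using C[of u] canon_log_le[OF compact_imp_bounded[OF compact_polytope] that, of u] by linarith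
  moreover have "0 \<le> C" using C[of 0] by linarith
  ultimately show thesis using that by blast
qed

lemma cINF_mult_pos:
  fixes f :: "'a \<Rightarrow> real"
  assumes c: "c > 0" and bdd: "bdd_below (range f)"
  shows "(INF u. c * f u) = c * (INF u. f u)"
proof (rule antisym)
  have "(INF u. c * f u) / c \<le> (INF u. f u)"
  proof (rule cINF_greatest)
    fix u
    obtain M where "\<And>u. M \<le> f u" using bdd by (auto simp: bdd_below_def)
    then have "bdd_below (range (\<lambda>u. c * f u))"
      using c by (intro bdd_belowI2[of _ "c * M"] mult_left_mono) auto
    then show "(INF u. c * f u) / c \<le> f u"
      using cINF_lower[of "\<lambda>u. c * f u" UNIV u] c by (simp add: divide_le_eq mult.commute)
  qed simp
  then show "(INF u. c * f u) \<le> c * (INF u. f u)"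
    using c by (simp add: divide_le_eq mult.commute)
  show "c * (INF u. f u) \<le> (INF u. c * f u)"
    by (rule cINF_greatest) (use bdd c in \<open>auto intro!: mult_left_mono cINF_lower\<close>)
qed

lemma legendre_scale:
  fixes g :: "real^'n \<Rightarrow> real"
  assumes "c > 0" and "bdd_below (range (\<lambda>u. x \<bullet> u - g u))"
  shows "legendre (\<lambda>u. c * g u) (c *\<^sub>R x) = c * legendre g x"
proof -
  have "legendre (\<lambda>u. c * g u) (c *\<^sub>R x) = (INF u. c * (x \<bullet> u - g u))"
    unfolding legendre_def by (simp add: right_diff_distrib)
  also have "\<dots> = c * legendre g x"
    unfolding legendre_def by (rule cINF_mult_pos[OF assms])
  finally show ?thesis .
qed

text \<open>On a set where it is bounded below, the Legendre transform is an infimum of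
  affine functions, hence upper semicontinuous there.\<close>
lemma borel_measurable_indicator_legendre:
  fixes g :: "real^'n \<Rightarrow> real"
  assumes S: "S \<in> sets borel" and bdd: "\<And>x. x \<in> S \<Longrightarrow> bdd_below (range (\<lambda>u. x \<bullet> u - g u))"
  shows "(\<lambda>x. indicator S x * legendre g x) \<in> borel_measurable borel"
  unfolding borel_measurable_iff_less
proof
  fix c :: real
  have "{x. indicator S x * legendre g x < c} =
      (S \<inter> (\<Union>u. {x. x \<bullet> u - g u < c})) \<union> (- S \<inter> {x. 0 < c})"
    using bdd by (auto simp: indicator_def legendre_def cINF_less_iff)
  moreover have "{x. x \<bullet> u - g u < c} = {x. u \<bullet> x < c + g u}" for u
    by (auto simp: inner_commute)
  then have "open (\<Union>u. {x. x \<bullet> u - g u < c})"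
    by (simp add: open_UN open_halfspace_lt)
  ultimately show "{x \<in> space borel. indicator S x * legendre g x < c} \<in> sets borel"
    using S by (auto simp: borel_open)
qed

lemma tendsto_legendre_perturbed:
  fixes g :: "real^'n \<Rightarrow> real" and e :: "nat \<Rightarrow> real^'n \<Rightarrow> real"
  assumes bdd: "bdd_below (range (\<lambda>u. x \<bullet> u - g u))"
    and e_lim: "\<And>u. (\<lambda>l. e l u) \<longlonglongrightarrow> 0"
    and e_le: "\<And>l u. e l u \<le> c l" and c_lim: "c \<longlonglongrightarrow> 0"
  shows "(\<lambda>l. legendre (\<lambda>u. g u + e l u) x) \<longlonglongrightarrow> legendre g x"
proof -
  have lower: "legendre g x - c l \<le> x \<bullet> u - (g u + e l u)" for l u
    using cINF_lower[OF bdd, of u] e_le[of l u] unfolding legendre_def by simp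
  then have bdd_l: "bdd_below (range (\<lambda>u. x \<bullet> u - (g u + e l u)))" for l
    by (rule bdd_belowI2)
  show ?thesis
  proof (rule order_tendstoI)
    fix a
    have "(\<lambda>l. legendre g x - c l) \<longlonglongrightarrow> legendre g x"
      using tendsto_diff[OF tendsto_const c_lim] by simp
    moreover assume "a < legendre g x"
    ultimately have "\<forall>\<^sub>F l in sequentially. a < legendre g x - c l"
      by (rule order_tendstoD)
    moreover have le: "legendre g x - c l \<le> legendre (\<lambda>u. g u + e l u) x" for l
      unfolding legendre_def[of "\<lambda>u. g u + e l u"] by (rule cINF_greatest) (use lower in auto)
    ultimately show "\<forall>\<^sub>F l in sequentially. a < legendre (\<lambda>u. g u + e l u) x"
      by (elim eventually_mono) (rule less_le_trans[OF _ le])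
  next
    fix b
    assume "legendre g x < b"
    then obtain u where "x \<bullet> u - g u < b"
      using bdd unfolding legendre_def by (auto simp: cINF_less_iff)
    have "(\<lambda>l. x \<bullet> u - (g u + e l u)) \<longlonglongrightarrow> x \<bullet> u - g u"
      using tendsto_diff[OF tendsto_const tendsto_add[OF tendsto_const e_lim]] by simp
    then have "\<forall>\<^sub>F l in sequentially. x \<bullet> u - (g u + e l u) < b"
      using \<open>x \<bullet> u - g u < b\<close> by (rule order_tendstoD)
    moreover have le: "legendre (\<lambda>u. g u + e l u) x \<le> x \<bullet> u - (g u + e l u)" for l
      unfolding legendre_def by (rule cINF_lower[OF bdd_l]) simp
    ultimately show "\<forall>\<^sub>F l in sequentially. legendre (\<lambda>u. g u + e l u) x < b"
      by (elim eventually_mono) (rule le_less_trans[OF le])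
  qed
qed

lemma lborel_integral_scale:
  fixes f :: "'a::euclidean_space \<Rightarrow> real"
  assumes [measurable]: "f \<in> borel_measurable borel" and "c \<noteq> 0"
  shows "(\<integral>x. f x \<partial>lborel) = \<bar>c\<bar> ^ DIM('a) * (\<integral>x. f (c *\<^sub>R x) \<partial>lborel)"
proof -
  have "(\<integral>x. f x \<partial>lborel) =
      (\<integral>x. f x \<partial>density (distr lborel borel (\<lambda>x. 0 + c *\<^sub>R x)) (\<lambda>_. \<bar>c\<bar> ^ DIM('a)))"
    by (subst lborel_affine[OF assms(2), of 0]) (rule refl)
  also have "\<dots> = (\<integral>x. \<bar>c\<bar> ^ DIM('a) * f (0 + c *\<^sub>R x) \<partial>lborel)"
    by (subst integral_density) (auto simp: integral_distr)
  finally show ?thesis by simp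
qed

definition dilated_sum :: "real \<Rightarrow> 'a::real_vector set \<Rightarrow> 'a set \<Rightarrow> 'a set" where
  "dilated_sum l P Q = {y + z | y z. y \<in> (\<lambda>w. l *\<^sub>R w) ` P \<and> z \<in> Q}"

lemma compact_dilated_sum:
  fixes P Q :: "'a::real_normed_vector set"
  shows "compact P \<Longrightarrow> compact Q \<Longrightarrow> compact (dilated_sum l P Q)"
  unfolding dilated_sum_def by (intro compact_sums compact_scaling)

lemma scaled_mem_dilated_sum_iff:
  fixes y :: "'a::real_vector"
  assumes "l > 0"
  shows "l *\<^sub>R y \<in> dilated_sum l P Q \<longleftrightarrow> (\<exists>p\<in>P. \<exists>z\<in>Q. y = p + (1 / l) *\<^sub>R z)"
proof -
  have "l *\<^sub>R y = l *\<^sub>R p + z \<longleftrightarrow> y = p + (1 / l) *\<^sub>R z" for p z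
  proof
    assume "l *\<^sub>R y = l *\<^sub>R p + z"
    then have "(1 / l) *\<^sub>R (l *\<^sub>R y) = (1 / l) *\<^sub>R (l *\<^sub>R p + z)" by simp
    then show "y = p + (1 / l) *\<^sub>R z" using assms by (simp add: scaleR_add_right)
  qed (use assms in \<open>simp add: scaleR_add_right\<close>)
  then show ?thesis unfolding dilated_sum_def by blast
qed

lemma eventually_scaled_not_mem_dilated_sum:
  fixes P Q :: "'a::real_normed_vector set"
  assumes "closed P" "bounded Q" "y \<notin> P"
  shows "\<forall>\<^sub>F l in sequentially. real l *\<^sub>R y \<notin> dilated_sum (real l) P Q"
proof -
  obtain e where e: "e > 0" "ball y e \<inter> P = {}"
    using assms(1,3) open_contains_ball[of "- P"] unfolding closed_def by blast
  obtain r where r: "\<And>z. z \<in> Q \<Longrightarrow> norm z \<le> r"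
    using assms(2) unfolding bounded_iff by blast
  obtain N :: nat where N: "r / e < real N" using reals_Archimedean2 by blast
  have "real l *\<^sub>R y \<notin> dilated_sum (real l) P Q" if l: "Suc N \<le> l" for l
  proof
    assume "real l *\<^sub>R y \<in> dilated_sum (real l) P Q"
    then obtain p z where "p \<in> P" "z \<in> Q" and y: "y = p + (1 / real l) *\<^sub>R z"
      using l by (auto simp: scaled_mem_dilated_sum_iff)
    have "e * real N \<le> e * real l" using l e(1) by (intro mult_left_mono) auto
    moreover have "r < e * real N" using N e(1) by (simp add: divide_less_eq mult.commute)
    ultimately have "r < e * real l" by linarith
    then have "norm z / real l < e" using r[OF \<open>z \<in> Q\<close>] l by (simp add: divide_less_eq mult.commute)
    then have "p \<in> ball y e" using l by (simp add: y dist_norm)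
    with e(2) \<open>p \<in> P\<close> show False by blast
  qed
  then show ?thesis unfolding eventually_sequentially by blast
qed

context
  fixes P Q :: "(real^'n) set" and g h :: "real^'n \<Rightarrow> real" and C :: real
  assumes compact_P: "compact P" and compact_Q: "compact Q" and zero_mem_Q: "0 \<in> Q"
    and C_nonneg: "0 \<le> C"
    and lower_P: "\<And>y u. y \<in> P \<Longrightarrow> - C \<le> y \<bullet> u - g u"
    and lower_Q: "\<And>z u. z \<in> Q \<Longrightarrow> - C \<le> z \<bullet> u - h u"
begin

lemma dilated_sum_lower:
  assumes "0 \<le> l" "x \<in> dilated_sum l P Q"
  shows "- (l + 1) * C \<le> x \<bullet> u - (l * g u + h u)"
proof -
  obtain p z where "p \<in> P" "z \<in> Q" and x: "x = l *\<^sub>R p + z"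
    using assms(2) unfolding dilated_sum_def by blast
  have "l * (- C) \<le> l * (p \<bullet> u - g u)"
    using lower_P[OF \<open>p \<in> P\<close>] assms(1) by (rule mult_left_mono)
  moreover have "x \<bullet> u - (l * g u + h u) = l * (p \<bullet> u - g u) + (z \<bullet> u - h u)"
    by (simp add: x inner_add_left algebra_simps)
  ultimately show ?thesis using lower_Q[OF \<open>z \<in> Q\<close>, of u] by (simp add: algebra_simps)
qed

lemma rescaled_dilated_sum_lower:
  assumes "1 \<le> l" "l *\<^sub>R y \<in> dilated_sum l P Q"
  shows "- 2 * C \<le> y \<bullet> u - (g u + h u / l)"
proof -
  have "l * (- 2 * C) \<le> - (l + 1) * C"
    using mult_nonneg_nonneg[of "l - 1" C] assms(1) C_nonneg by (simp add: algebra_simps)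
  also have "\<dots> \<le> (l *\<^sub>R y) \<bullet> u - (l * g u + h u)"
    using assms by (intro dilated_sum_lower) auto
  also have "\<dots> = l * (y \<bullet> u - (g u + h u / l))"
    using assms(1) by (simp add: algebra_simps)
  finally have "l * (- 2 * C) \<le> l * (y \<bullet> u - (g u + h u / l))" .
  then show ?thesis by (rule mult_left_le_imp_le) (use assms(1) in simp)
qed

lemma legendre_rescaled_bdd_below:
  "1 \<le> l \<Longrightarrow> l *\<^sub>R y \<in> dilated_sum l P Q \<Longrightarrow> bdd_below (range (\<lambda>u. y \<bullet> u - (g u + h u / l)))"
  by (rule bdd_belowI2) (rule rescaled_dilated_sum_lower)

definition rescaled_integrand :: "nat \<Rightarrow> real^'n \<Rightarrow> real" where
  "rescaled_integrand l y =
    indicator (dilated_sum (real l) P Q) (real l *\<^sub>R y) * legendre (\<lambda>u. g u + h u / real l) y"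

lemma integral_dilated_sum_eq_rescaled:
  assumes "0 < l"
  shows "(LINT x : dilated_sum (real l) P Q | lborel. legendre (\<lambda>u. real l * g u + h u) x)
      / real l ^ (CARD('n) + 1) = (\<integral>y. rescaled_integrand l y \<partial>lborel)"
proof -
  let ?R = "dilated_sum (real l) P Q"
  let ?f = "\<lambda>x. indicator ?R x * legendre (\<lambda>u. real l * g u + h u) x"
  have "?f \<in> borel_measurable borel"
  proof (rule borel_measurable_indicator_legendre)
    show "?R \<in> sets borel"
      by (intro borel_closed compact_imp_closed compact_dilated_sum compact_P compact_Q)
    show "bdd_below (range (\<lambda>u. x \<bullet> u - (real l * g u + h u)))" if "x \<in> ?R" for x
      by (rule bdd_belowI2) (rule dilated_sum_lower[OF _ that], simp)
  qed
  then have "(\<integral>x. ?f x \<partial>lborel) = real l ^ CARD('n) * (\<integral>y. ?f (real l *\<^sub>R y) \<partial>lborel)"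
    using assms by (subst lborel_integral_scale[of _ "real l"]) auto
  also have "(\<lambda>y. ?f (real l *\<^sub>R y)) = (\<lambda>y. real l * rescaled_integrand l y)"
  proof
    fix y
    show "?f (real l *\<^sub>R y) = real l * rescaled_integrand l y"
    proof (cases "real l *\<^sub>R y \<in> ?R")
      case True
      have "legendre (\<lambda>u. real l * g u + h u) (real l *\<^sub>R y)
          = legendre (\<lambda>u. real l * (g u + h u / real l)) (real l *\<^sub>R y)"
        using assms by (simp add: algebra_simps)
      also have "\<dots> = real l * legendre (\<lambda>u. g u + h u / real l) y"
        using assms legendre_rescaled_bdd_below[OF _ True] by (intro legendre_scale) auto
      finally show ?thesis using True by (simp add: rescaled_integrand_def)
    qed (simp add: rescaled_integrand_def)
  qed
  finally have "(\<integral>x. ?f x \<partial>lborel) = real l ^ (CARD('n) + 1) * (\<integral>y. rescaled_integrand l y \<partial>lborel)"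
    by simp
  then show ?thesis
    using assms by (simp add: set_lebesgue_integral_def)
qed

lemma borel_measurable_rescaled_integrand:
  assumes "0 < l"
  shows "rescaled_integrand l \<in> borel_measurable borel"
proof -
  let ?S = "(\<lambda>y. real l *\<^sub>R y) -` dilated_sum (real l) P Q"
  have "closed ?S"
    by (intro continuous_closed_vimage compact_imp_closed compact_dilated_sum compact_P compact_Q)
      (auto intro: continuous_intros)
  then have "(\<lambda>y. indicator ?S y * legendre (\<lambda>u. g u + h u / real l) y) \<in> borel_measurable borel"
    using assms by (intro borel_measurable_indicator_legendre borel_closed legendre_rescaled_bdd_below) auto
  then show ?thesis
    unfolding rescaled_integrand_def[abs_def] by (simp add: indicator_def)
qed

lemma rescaled_integrand_tendsto:
  "(\<lambda>l. rescaled_integrand l y) \<longlonglongrightarrow> indicator P y * legendre g y"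
proof (cases "y \<in> P")
  case True
  have "real l *\<^sub>R y \<in> dilated_sum (real l) P Q" for l
    using True zero_mem_Q unfolding dilated_sum_def by force
  then have "(\<lambda>l. rescaled_integrand l y) = (\<lambda>l. legendre (\<lambda>u. g u + h u / real l) y)"
    by (simp add: rescaled_integrand_def)
  also have "\<dots> \<longlonglongrightarrow> legendre g y"
  proof (rule tendsto_legendre_perturbed)
    show "bdd_below (range (\<lambda>u. y \<bullet> u - g u))"
      by (rule bdd_belowI2) (rule lower_P[OF True])
    show "h u / real l \<le> C / real l" for u l
      using lower_Q[OF zero_mem_Q, of u] by (simp add: divide_right_mono)
  qed (rule lim_const_over_n)+
  finally show ?thesis using True by simp
next
  case False
  have "\<forall>\<^sub>F l in sequentially. rescaled_integrand l y = 0"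
    using eventually_scaled_not_mem_dilated_sum[OF compact_imp_closed[OF compact_P]
        compact_imp_bounded[OF compact_Q] False]
    by (rule eventually_mono) (simp add: rescaled_integrand_def)
  then show ?thesis using False by (simp add: tendsto_eventually)
qed

lemma rescaled_integrand_bound:
  assumes "0 < l" "P \<subseteq> cball 0 r" "Q \<subseteq> cball 0 r"
  shows "\<bar>rescaled_integrand l y\<bar> \<le> (2 * C + \<bar>g 0\<bar> + \<bar>h 0\<bar>) * indicator (cball 0 (2 * r)) y"
proof (cases "real l *\<^sub>R y \<in> dilated_sum (real l) P Q")
  case True
  let ?L = "legendre (\<lambda>u. g u + h u / real l) y"
  have l: "1 \<le> real l" using assms(1) by simp
  obtain p z where "p \<in> P" "z \<in> Q" and y: "y = p + (1 / real l) *\<^sub>R z"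
    using True assms(1) by (auto simp: scaled_mem_dilated_sum_iff)
  have "norm p \<le> r" "norm z \<le> r" using assms(2,3) \<open>p \<in> P\<close> \<open>z \<in> Q\<close> by auto
  moreover have "norm z / real l \<le> norm z" using l by (simp add: divide_le_eq mult_le_cancel_left1)
  ultimately have "norm y \<le> 2 * r"
    using norm_triangle_ineq[of p "(1 / real l) *\<^sub>R z"] l by (simp add: y)
  moreover have "- 2 * C \<le> ?L"
    unfolding legendre_def by (rule cINF_greatest) (use rescaled_dilated_sum_lower[OF l True] in auto)
  moreover have "?L \<le> y \<bullet> 0 - (g 0 + h 0 / real l)"
    unfolding legendre_def by (rule cINF_lower[OF legendre_rescaled_bdd_below[OF l True]]) simp
  moreover have "\<bar>h 0 / real l\<bar> \<le> \<bar>h 0\<bar>"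
    using l by (simp add: abs_div divide_le_eq mult_le_cancel_left1)
  ultimately have "\<bar>?L\<bar> \<le> 2 * C + \<bar>g 0\<bar> + \<bar>h 0\<bar>"
    unfolding abs_le_iff inner_zero_right
    using C_nonneg abs_ge_minus_self[of "g 0"] abs_ge_minus_self[of "h 0 / real l"] by linarith
  with \<open>norm y \<le> 2 * r\<close> True show ?thesis by (simp add: rescaled_integrand_def)
qed (use C_nonneg in \<open>simp add: rescaled_integrand_def\<close>)

lemma tendsto_integral_legendre_dilated_sum:
  "(\<lambda>l::nat. (LINT x : dilated_sum (real l) P Q | lborel. legendre (\<lambda>u. real l * g u + h u) x)
      / real l ^ (CARD('n) + 1)) \<longlonglongrightarrow> (LINT x : P | lborel. legendre g x)"
proof (rule LIMSEQ_imp_Suc)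
  obtain r where r: "P \<subseteq> cball 0 r" "Q \<subseteq> cball 0 r"
    using compact_imp_bounded[OF compact_Un[OF compact_P compact_Q]]
    unfolding bounded_iff by (auto simp: subset_iff)
  let ?w = "\<lambda>y. (2 * C + \<bar>g 0\<bar> + \<bar>h 0\<bar>) * indicator (cball 0 (2 * r)) y"
  have "(\<lambda>i. \<integral>y. rescaled_integrand (Suc i) y \<partial>lborel)
      \<longlonglongrightarrow> (\<integral>y. indicator P y * legendre g y \<partial>lborel)"
  proof (rule integral_dominated_convergence[where w = ?w])
    show "(\<lambda>y. indicator P y * legendre g y) \<in> borel_measurable lborel"
      using borel_measurable_indicator_legendre[OF borel_closed[OF compact_imp_closed[OF compact_P]]
          bdd_belowI2[OF lower_P]] by simp
    show "rescaled_integrand (Suc i) \<in> borel_measurable lborel" for i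
      using borel_measurable_rescaled_integrand by simp
    show "integrable lborel ?w"
      using emeasure_bounded_finite[OF bounded_cball]
      by (intro integrable_mult_right) (simp add: integrable_indicator_iff borel_closed)
    show "AE y in lborel. (\<lambda>i. rescaled_integrand (Suc i) y) \<longlonglongrightarrow> indicator P y * legendre g y"
      by (intro AE_I2 LIMSEQ_Suc rescaled_integrand_tendsto)
    show "AE y in lborel. norm (rescaled_integrand (Suc i) y) \<le> ?w y" for i
      using rescaled_integrand_bound[OF zero_less_Suc r] by (intro AE_I2) (simp only: real_norm_def)
  qed
  moreover have "(LINT x : P | lborel. legendre g x) = (\<integral>y. indicator P y * legendre g y \<partial>lborel)"
    by (simp add: set_lebesgue_integral_def)
  ultimately show "(\<lambda>i. (LINT x : dilated_sum (real (Suc i)) P Q | lborel.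
        legendre (\<lambda>u. real (Suc i) * g u + h u) x) / real (Suc i) ^ (CARD('n) + 1))
      \<longlonglongrightarrow> (LINT x : P | lborel. legendre g x)"
    unfolding integral_dilated_sum_eq_rescaled[OF zero_less_Suc] by simp
qed

end

theorem proposition3p5:
  fixes V :: "(real^'n) set" and \<Sigma> :: "(real^'n) set set"
    and aD aA :: "real^'n \<Rightarrow> int" and gD gA :: "real^'n \<Rightarrow> real"
  assumes "smooth_projective_fan V \<Sigma>"
    and "toric_metrized \<Sigma> aD gD"
    and "toric_metrized \<Sigma> aA gA"
    and "effective V aA"
  shows "(\<lambda>l::nat. (LINT x : {y + z | y z. y \<in> (\<lambda>w. real l *\<^sub>R w) ` polytope \<Sigma> aD
                                   \<and> z \<in> polytope \<Sigma> aA} | lborel.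
              legendre (\<lambda>u. real l * gD u + gA u) x) / real l ^ (CARD('n) + 1))
         \<longlonglongrightarrow> (LINT x : polytope \<Sigma> aD | lborel. legendre gD x)"
proof -
  obtain CD where "0 \<le> CD" and CD: "\<And>y u. y \<in> polytope \<Sigma> aD \<Longrightarrow> - CD \<le> y \<bullet> u - gD u"
    using toric_metrized_lower_bound[OF assms(2)] by blast
  obtain CA where CA: "\<And>z u. z \<in> polytope \<Sigma> aA \<Longrightarrow> - CA \<le> z \<bullet> u - gA u"
    using toric_metrized_lower_bound[OF assms(3)] by blast
  have "0 \<le> max CD CA" using \<open>0 \<le> CD\<close> by simp
  moreover have "- max CD CA \<le> y \<bullet> u - gD u" if "y \<in> polytope \<Sigma> aD" for y u
    using CD[OF that, of u] by linarith
  moreover have "- max CD CA \<le> z \<bullet> u - gA u" if "z \<in> polytope \<Sigma> aA" for z u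
    using CA[OF that, of u] by linarith
  ultimately show ?thesis
    using tendsto_integral_legendre_dilated_sum[OF compact_polytope compact_polytope
        zero_mem_polytope[OF assms(1,4)]]
    unfolding dilated_sum_def by blast
qed

end
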